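(* Let $G$ be a graph with at least one vertex and $f:V(G)\to\{1,2,3,\dots\}$. Then $\gamma_{gr}^{\times2}(G_f)\le2\gamma_{gr}(G)$. Moreover, there exists a GDDS $S=(v_1,\dots,v_{2k})$ of $G_f$ such that for each odd $i\in\{1,3,\dots,2k-1\}$, $v_i$ and $v_{i+1}$ are true twin vertices in $G_f$.
   Context: Graphs are finite, simple, undirected; $N[v]$ closed neighborhood; $x,y$ are true twins if $N[x]=N[y]$. $G_f$ is the graph with vertex set $\bigcup_{v\in V(G)}\{v^1,\dots,v^{f(v)+1}\}$ in which $v^iu^j$ is an edge iff either $v=u$ and $i\neq j$, or $vu\in E(G)$. A sequence $(v_1,\dots,v_k)$ of distinct vertices is legal if $N[v_i]\setminus\bigcup_{j<i}N[v_j]\neq\emptyset$ for $i\ge2$, and a dominating sequence if moreover its vertex set is dominating; $\gamma_{gr}(G)$ is the maximum length of a dominating sequence. A sequence of distinct vertices is a double neighborhood sequence if for each $i$ some $w\in N[v_i]$ satisfies $|\{j<i:w\in N[v_j]\}|\le1$, and a double dominating sequence (DDS) if moreover every vertex $w$ satisfies $|N[w]\cap\{v_1,\dots,v_k\}|\ge2$; a GDDS is a DDS of maximum length, this length being $\gamma_{gr}^{\times2}$. *)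

theory Defs
  imports Main
begin

text \<open>A finite simple graph is given by a vertex set V and a symmetric,
irreflexive adjacency relation E (only adjacencies inside V matter).\<close>

definition graph :: "'a set \<Rightarrow> ('a \<Rightarrow> 'a \<Rightarrow> bool) \<Rightarrow> bool" where
  "graph V E \<longleftrightarrow> finite V \<and> (\<forall>x y. E x y \<longrightarrow> E y x) \<and> (\<forall>x. \<not> E x x)"

definition cnbhd :: "'a set \<Rightarrow> ('a \<Rightarrow> 'a \<Rightarrow> bool) \<Rightarrow> 'a \<Rightarrow> 'a set" where
  "cnbhd V E v = {u \<in> V. E v u} \<union> {v}"

definition true_twins :: "'a set \<Rightarrow> ('a \<Rightarrow> 'a \<Rightarrow> bool) \<Rightarrow> 'a \<Rightarrow> 'a \<Rightarrow> bool" where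
  "true_twins V E x y \<longleftrightarrow> cnbhd V E x = cnbhd V E y"

text \<open>The graph G_f: vertex v^i is encoded as the pair (v, i), 1 <= i <= f v + 1.\<close>

definition Gf_verts :: "'a set \<Rightarrow> ('a \<Rightarrow> nat) \<Rightarrow> ('a \<times> nat) set" where
  "Gf_verts V f = {(v, i). v \<in> V \<and> 1 \<le> i \<and> i \<le> f v + 1}"

definition Gf_adj :: "('a \<Rightarrow> 'a \<Rightarrow> bool) \<Rightarrow> ('a \<times> nat) \<Rightarrow> ('a \<times> nat) \<Rightarrow> bool" where
  "Gf_adj E p q \<longleftrightarrow> (fst p = fst q \<and> snd p \<noteq> snd q) \<or> E (fst p) (fst q)"

text \<open>Sequences are lists; positions are 0-based.\<close>

definition legal_seq :: "'a set \<Rightarrow> ('a \<Rightarrow> 'a \<Rightarrow> bool) \<Rightarrow> 'a list \<Rightarrow> bool" where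
  "legal_seq V E s \<longleftrightarrow> distinct s \<and> set s \<subseteq> V \<and>
     (\<forall>i. 1 \<le> i \<and> i < length s \<longrightarrow>
        cnbhd V E (s ! i) - (\<Union>j<i. cnbhd V E (s ! j)) \<noteq> {})"

definition dominating_seq :: "'a set \<Rightarrow> ('a \<Rightarrow> 'a \<Rightarrow> bool) \<Rightarrow> 'a list \<Rightarrow> bool" where
  "dominating_seq V E s \<longleftrightarrow> legal_seq V E s \<and> (\<Union>v\<in>set s. cnbhd V E v) = V"

definition grundy_dom :: "'a set \<Rightarrow> ('a \<Rightarrow> 'a \<Rightarrow> bool) \<Rightarrow> nat" where
  "grundy_dom V E = Max {length s | s. dominating_seq V E s}"

definition double_nbhd_seq :: "'a set \<Rightarrow> ('a \<Rightarrow> 'a \<Rightarrow> bool) \<Rightarrow> 'a list \<Rightarrow> bool" where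
  "double_nbhd_seq V E s \<longleftrightarrow> distinct s \<and> set s \<subseteq> V \<and>
     (\<forall>i < length s. \<exists>w \<in> cnbhd V E (s ! i).
        card {j. j < i \<and> w \<in> cnbhd V E (s ! j)} \<le> 1)"

definition double_dom_seq :: "'a set \<Rightarrow> ('a \<Rightarrow> 'a \<Rightarrow> bool) \<Rightarrow> 'a list \<Rightarrow> bool" where
  "double_dom_seq V E s \<longleftrightarrow> double_nbhd_seq V E s \<and>
     (\<forall>w \<in> V. card (cnbhd V E w \<inter> set s) \<ge> 2)"

definition grundy_double_dom :: "'a set \<Rightarrow> ('a \<Rightarrow> 'a \<Rightarrow> bool) \<Rightarrow> nat" where
  "grundy_double_dom V E = Max {length s | s. double_dom_seq V E s}"

definition GDDS :: "'a set \<Rightarrow> ('a \<Rightarrow> 'a \<Rightarrow> bool) \<Rightarrow> 'a list \<Rightarrow> bool" where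
  "GDDS V E s \<longleftrightarrow> double_dom_seq V E s \<and> length s = grundy_double_dom V E"

end

theory Submission
  imports Defs
begin

text \<open>
  Project a double neighbourhood sequence of \<open>G\<^sub>f\<close> onto \<open>G\<close> by \<open>v\<^sup>i \<mapsto> v\<close>;
  this preserves the witnesses, since closed neighbourhoods in \<open>G\<^sub>f\<close> only depend on
  the projection. Split the projected list into the entries that have a footprint
  (a neighbour not dominated by earlier entries) and the remaining ones. Both sublists are legal sequences
  of \<open>G\<close>: the first by construction, the second because the witness of such an entry
  is dominated by at most one earlier entry, which is necessarily its first dominator
  and hence has a footprint. So each has length at most \<open>\<gamma>\<^sub>g\<^sub>r(G)\<close>.
  Conversely, replacing each vertex \<open>v\<close> of a Grundy dominating sequence of \<open>G\<close>
  by the true twins \<open>v\<^sup>1, v\<^sup>2\<close> gives a double dominating sequence of length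
  \<open>2\<gamma>\<^sub>g\<^sub>r(G)\<close>.
\<close>

lemma cnbhd_self: "v \<in> cnbhd V E v"
  by (simp add: cnbhd_def)

lemma legal_seq_snoc:
  assumes "legal_seq V E xs" "x \<in> V" "\<not> cnbhd V E x \<subseteq> (\<Union>y\<in>set xs. cnbhd V E y)"
  shows "legal_seq V E (xs @ [x])"
proof -
  have "x \<notin> set xs" using assms(3) by blast
  moreover have "(\<Union>j<length xs. cnbhd V E (xs ! j)) = (\<Union>y\<in>set xs. cnbhd V E y)"
    unfolding set_conv_nth by blast
  ultimately show ?thesis
    using assms unfolding legal_seq_def
    by (auto simp: nth_append less_Suc_eq split: if_splits)
qed

lemma legal_seq_extends_to_dominating_seq:
  assumes "finite V" "legal_seq V E s"
  shows "\<exists>u. dominating_seq V E (s @ u)"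
  using assms(2)
proof (induction "card (V - (\<Union>v\<in>set s. cnbhd V E v))" arbitrary: s rule: less_induct)
  case less
  show ?case
  proof (cases "V \<subseteq> (\<Union>v\<in>set s. cnbhd V E v)")
    case True
    have "(\<Union>v\<in>set s. cnbhd V E v) \<subseteq> V"
      using less.prems by (auto simp: legal_seq_def cnbhd_def)
    with True less.prems have "dominating_seq V E (s @ [])"
      by (simp add: dominating_seq_def)
    then show ?thesis by blast
  next
    case False
    then obtain w where w: "w \<in> V" "w \<notin> (\<Union>v\<in>set s. cnbhd V E v)" by blast
    have "legal_seq V E (s @ [w])"
      using legal_seq_snoc[OF less.prems w(1)] w(2) cnbhd_self[of w V E] by blast
    moreover have "card (V - (\<Union>v\<in>set (s @ [w]). cnbhd V E v)) < card (V - (\<Union>v\<in>set s. cnbhd V E v))"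
      using assms(1) w cnbhd_self[of w V E] by (intro psubset_card_mono) auto
    ultimately obtain u where "dominating_seq V E ((s @ [w]) @ u)"
      using less.hyps by blast
    then show ?thesis by auto
  qed
qed

lemma dominating_seq_length_le_card:
  assumes "finite V" "dominating_seq V E s"
  shows "length s \<le> card V"
proof -
  have "distinct s" "set s \<subseteq> V"
    using assms(2) by (auto simp: dominating_seq_def legal_seq_def)
  then show ?thesis
    using assms(1) by (metis card_mono distinct_card)
qed

lemma finite_dominating_seq_lengths:
  "finite V \<Longrightarrow> finite {length s | s. dominating_seq V E s}"
  by (rule finite_subset[of _ "{..card V}"]) (auto dest: dominating_seq_length_le_card)

lemma legal_seq_length_le_grundy_dom:
  assumes "finite V" "legal_seq V E s"
  shows "length s \<le> grundy_dom V E"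
proof -
  obtain u where "dominating_seq V E (s @ u)"
    using legal_seq_extends_to_dominating_seq[OF assms] by blast
  then have "length (s @ u) \<le> grundy_dom V E"
    unfolding grundy_dom_def using finite_dominating_seq_lengths[OF assms(1)]
    by (intro Max_ge) blast+
  then show ?thesis by simp
qed

lemma grundy_dom_attained:
  assumes "finite V"
  shows "\<exists>D. dominating_seq V E D \<and> length D = grundy_dom V E"
proof -
  obtain u where "dominating_seq V E ([] @ u)"
    using legal_seq_extends_to_dominating_seq[OF assms, of E "[]"]
    by (auto simp: legal_seq_def)
  then have "grundy_dom V E \<in> {length s | s. dominating_seq V E s}"
    unfolding grundy_dom_def using finite_dominating_seq_lengths[OF assms]
    by (intro Max_in) auto
  then show ?thesis by auto
qed

definition has_footprint :: "'a set \<Rightarrow> ('a \<Rightarrow> 'a \<Rightarrow> bool) \<Rightarrow> 'a list \<Rightarrow> nat \<Rightarrow> bool" where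
  "has_footprint V E t i \<longleftrightarrow> (\<exists>w\<in>cnbhd V E (t ! i). \<forall>j<i. w \<notin> cnbhd V E (t ! j))"

lemma legal_seq_has_footprint:
  assumes "legal_seq V E s" "i < length s"
  shows "has_footprint V E s i"
proof (cases "i = 0")
  case True
  then show ?thesis using cnbhd_self[of "s ! 0" V E] by (auto simp: has_footprint_def)
next
  case False
  with assms have "\<not> cnbhd V E (s ! i) \<subseteq> (\<Union>j<i. cnbhd V E (s ! j))"
    by (simp add: legal_seq_def)
  then show ?thesis by (auto simp: has_footprint_def)
qed

lemma dominated_by_footprint:
  assumes "w \<in> cnbhd V E (t ! j)"
  obtains j0 where "j0 \<le> j" "has_footprint V E t j0" "w \<in> cnbhd V E (t ! j0)"
proof -
  obtain j0 where "j0 \<le> j" "w \<in> cnbhd V E (t ! j0)" "\<forall>k<j0. w \<notin> cnbhd V E (t ! k)"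
    using ex_least_nat_le[of "\<lambda>k. w \<in> cnbhd V E (t ! k)" j] assms by blast
  then show ?thesis using that by (auto simp: has_footprint_def)
qed

lemma legal_seq_map_nth_filter:
  assumes "set t \<subseteq> V"
    and "\<And>i. i < length t \<Longrightarrow> P i \<Longrightarrow> \<exists>w\<in>cnbhd V E (t ! i). \<forall>j<i. P j \<longrightarrow> w \<notin> cnbhd V E (t ! j)"
  shows "legal_seq V E (map ((!) t) (filter P [0..<length t]))"
proof -
  have "legal_seq V E (map ((!) t) (filter P [0..<n]))" if "n \<le> length t" for n
    using that
  proof (induction n)
    case 0
    show ?case by (simp add: legal_seq_def)
  next
    case (Suc n)
    show ?case
    proof (cases "P n")
      case False
      with Suc show ?thesis by simp
    next
      case True
      then obtain w where "w \<in> cnbhd V E (t ! n)" "\<forall>j<n. P j \<longrightarrow> w \<notin> cnbhd V E (t ! j)"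
        using assms(2)[of n] Suc.prems by auto
      then have "\<not> cnbhd V E (t ! n) \<subseteq> (\<Union>y\<in>set (map ((!) t) (filter P [0..<n])). cnbhd V E y)"
        by auto
      moreover have "t ! n \<in> V" using assms(1) Suc.prems by auto
      moreover have "legal_seq V E (map ((!) t) (filter P [0..<n]))" using Suc by simp
      ultimately show ?thesis
        using legal_seq_snoc True by fastforce
    qed
  qed
  then show ?thesis by simp
qed

lemma length_le_twice_grundy_dom:
  assumes "finite V" "set t \<subseteq> V"
    and "\<And>i. i < length t \<Longrightarrow> \<exists>w\<in>cnbhd V E (t ! i). card {j. j < i \<and> w \<in> cnbhd V E (t ! j)} \<le> 1"
  shows "length t \<le> 2 * grundy_dom V E"
proof -
  let ?F = "has_footprint V E t"
  have "legal_seq V E (map ((!) t) (filter ?F [0..<length t]))"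
    by (rule legal_seq_map_nth_filter[OF assms(2)]) (auto simp: has_footprint_def)
  moreover have "legal_seq V E (map ((!) t) (filter (\<lambda>i. \<not> ?F i) [0..<length t]))"
  proof (rule legal_seq_map_nth_filter[OF assms(2)])
    fix i assume "i < length t"
    then obtain w where w: "w \<in> cnbhd V E (t ! i)" "card {j. j < i \<and> w \<in> cnbhd V E (t ! j)} \<le> 1"
      using assms(3) by blast
    have "w \<notin> cnbhd V E (t ! j)" if "j < i" "\<not> ?F j" for j
    proof
      assume "w \<in> cnbhd V E (t ! j)"
      then obtain j0 where "j0 \<le> j" "?F j0" "w \<in> cnbhd V E (t ! j0)"
        by (rule dominated_by_footprint)
      then have "{j0, j} \<subseteq> {j. j < i \<and> w \<in> cnbhd V E (t ! j)}" "card {j0, j} = 2"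
        using that \<open>w \<in> cnbhd V E (t ! j)\<close> by (auto intro: card_2_iff'[THEN iffD2])
      then have "2 \<le> card {j. j < i \<and> w \<in> cnbhd V E (t ! j)}"
        by (metis card_mono finite_Collect_conjI finite_Collect_less_nat)
      then show False using w(2) by simp
    qed
    then show "\<exists>w\<in>cnbhd V E (t ! i). \<forall>j<i. \<not> ?F j \<longrightarrow> w \<notin> cnbhd V E (t ! j)"
      using w(1) by blast
  qed
  ultimately show ?thesis
    using legal_seq_length_le_grundy_dom[OF assms(1)] sum_length_filter_compl[of ?F "[0..<length t]"]
    by (metis length_map length_upt minus_nat.diff_0 mult_2 add_mono)
qed

lemma cnbhd_Gf:
  assumes "p \<in> Gf_verts V f"
  shows "cnbhd (Gf_verts V f) (Gf_adj E) p = {q \<in> Gf_verts V f. fst q \<in> cnbhd V E (fst p)}"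
  using assms by (auto simp: cnbhd_def Gf_adj_def Gf_verts_def)

lemma true_twins_Gf:
  assumes "p \<in> Gf_verts V f" "q \<in> Gf_verts V f" "fst p = fst q"
  shows "true_twins (Gf_verts V f) (Gf_adj E) p q"
  using assms by (simp add: true_twins_def cnbhd_Gf)

lemma double_nbhd_seq_Gf_length_le:
  assumes "finite V" "double_nbhd_seq (Gf_verts V f) (Gf_adj E) S"
  shows "length S \<le> 2 * grundy_dom V E"
proof -
  let ?W = "Gf_verts V f" and ?F = "Gf_adj E"
  have SW: "set S \<subseteq> ?W" using assms(2) by (simp add: double_nbhd_seq_def)
  then have "set (map fst S) \<subseteq> V" by (auto simp: Gf_verts_def)
  moreover have "\<exists>v\<in>cnbhd V E (map fst S ! i). card {j. j < i \<and> v \<in> cnbhd V E (map fst S ! j)} \<le> 1"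
    if i: "i < length (map fst S)" for i
  proof -
    have S_nbhd: "cnbhd ?W ?F (S ! j) = {q \<in> ?W. fst q \<in> cnbhd V E (map fst S ! j)}"
      if "j < length S" for j
    proof -
      have "S ! j \<in> ?W" using SW that nth_mem by blast
      then show ?thesis using that by (simp add: cnbhd_Gf)
    qed
    obtain w where w: "w \<in> cnbhd ?W ?F (S ! i)" "card {j. j < i \<and> w \<in> cnbhd ?W ?F (S ! j)} \<le> 1"
      using assms(2) i by (auto simp: double_nbhd_seq_def)
    have "{j. j < i \<and> w \<in> cnbhd ?W ?F (S ! j)} = {j. j < i \<and> fst w \<in> cnbhd V E (map fst S ! j)}"
      using w(1) i S_nbhd by auto
    then show ?thesis using w i S_nbhd by auto
  qed
  ultimately show ?thesis
    using length_le_twice_grundy_dom[OF assms(1), of "map fst S"] by simp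
qed

definition twin_doubling :: "'a list \<Rightarrow> ('a \<times> nat) list" where
  "twin_doubling D = concat (map (\<lambda>v. [(v, 1), (v, 2)]) D)"

lemma length_twin_doubling [simp]: "length (twin_doubling D) = 2 * length D"
  by (induction D) (simp_all add: twin_doubling_def)

lemma set_twin_doubling: "set (twin_doubling D) = (\<Union>v\<in>set D. {(v, 1), (v, 2)})"
  by (auto simp: twin_doubling_def)

lemma distinct_twin_doubling: "distinct D \<Longrightarrow> distinct (twin_doubling D)"
  by (induction D) (auto simp: twin_doubling_def)

lemma nth_twin_doubling:
  "i < 2 * length D \<Longrightarrow> twin_doubling D ! i = (D ! (i div 2), i mod 2 + 1)"
proof (induction D arbitrary: i)
  case Nil
  then show ?case by simp
next
  case (Cons v D)
  show ?case
  proof (cases "i < 2")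
    case True
    then show ?thesis by (auto simp: twin_doubling_def less_2_cases_iff)
  next
    case False
    then obtain k where "i = Suc (Suc k)" by (metis add_2_eq_Suc le_Suc_ex not_less)
    with Cons show ?thesis by (simp add: twin_doubling_def)
  qed
qed

lemma twin_doubling_in_Gf:
  assumes "set D \<subseteq> V" "\<forall>v \<in> V. f v \<ge> 1"
  shows "set (twin_doubling D) \<subseteq> Gf_verts V f"
  using assms by (auto simp: set_twin_doubling Gf_verts_def)

lemma double_nbhd_seq_twin_doubling:
  assumes "legal_seq V E D" "\<forall>v \<in> V. f v \<ge> 1"
  shows "double_nbhd_seq (Gf_verts V f) (Gf_adj E) (twin_doubling D)"
  unfolding double_nbhd_seq_def
proof (intro conjI allI impI)
  let ?W = "Gf_verts V f" and ?F = "Gf_adj E" and ?S = "twin_doubling D"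
  have D: "distinct D" "set D \<subseteq> V" using assms(1) by (auto simp: legal_seq_def)
  then show "distinct ?S" "set ?S \<subseteq> ?W"
    using distinct_twin_doubling twin_doubling_in_Gf assms(2) by blast+
  have S_nbhd: "cnbhd ?W ?F (?S ! j) = {q \<in> ?W. fst q \<in> cnbhd V E (D ! (j div 2))}"
    if "j < length ?S" for j
  proof -
    have "?S ! j \<in> ?W" using \<open>set ?S \<subseteq> ?W\<close> that nth_mem by blast
    then show ?thesis using that by (simp add: cnbhd_Gf nth_twin_doubling)
  qed
  fix i assume i: "i < length ?S"
  define k where "k = i div 2"
  have k: "k < length D" using i by (simp add: k_def)
  then obtain w where w: "w \<in> cnbhd V E (D ! k)" "\<forall>j<k. w \<notin> cnbhd V E (D ! j)"
    using legal_seq_has_footprint[OF assms(1)] by (auto simp: has_footprint_def)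
  have "w \<in> V" using w(1) D(2) k by (auto simp: cnbhd_def)
  then have w1: "(w, 1) \<in> cnbhd ?W ?F (?S ! i)"
    using S_nbhd[OF i] w(1) assms(2) by (simp add: Gf_verts_def k_def)
  have "{j. j < i \<and> (w, 1) \<in> cnbhd ?W ?F (?S ! j)} \<subseteq> {2 * k}"
  proof
    fix j assume j: "j \<in> {j. j < i \<and> (w, 1) \<in> cnbhd ?W ?F (?S ! j)}"
    then have "w \<in> cnbhd V E (D ! (j div 2))" using S_nbhd i by auto
    then have "\<not> j div 2 < k" using w(2) by blast
    moreover have "j div 2 \<le> k" using j by (simp add: k_def div_le_mono)
    ultimately show "j \<in> {2 * k}" using j by (auto simp: k_def)
  qed
  then have "card {j. j < i \<and> (w, 1) \<in> cnbhd ?W ?F (?S ! j)} \<le> 1"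
    using card_mono[of "{2 * k}"] by fastforce
  with w1 show "\<exists>w\<in>cnbhd ?W ?F (?S ! i). card {j. j < i \<and> w \<in> cnbhd ?W ?F (?S ! j)} \<le> 1"
    by blast
qed

lemma double_dom_seq_twin_doubling:
  assumes "graph V E" "dominating_seq V E D" "\<forall>v \<in> V. f v \<ge> 1"
  shows "double_dom_seq (Gf_verts V f) (Gf_adj E) (twin_doubling D)"
  unfolding double_dom_seq_def
proof (intro conjI ballI)
  let ?W = "Gf_verts V f" and ?F = "Gf_adj E" and ?S = "twin_doubling D"
  have legal: "legal_seq V E D" and dom: "(\<Union>v\<in>set D. cnbhd V E v) = V"
    using assms(2) by (auto simp: dominating_seq_def)
  show "double_nbhd_seq ?W ?F ?S"
    using legal assms(3) by (rule double_nbhd_seq_twin_doubling)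
  fix q assume q: "q \<in> ?W"
  then have "fst q \<in> V" by (auto simp: Gf_verts_def)
  then obtain v where v: "v \<in> set D" "fst q \<in> cnbhd V E v" using dom by blast
  have "v \<in> V" using v(1) legal by (auto simp: legal_seq_def)
  then have "v \<in> cnbhd V E (fst q)"
    using v(2) assms(1) by (auto simp: cnbhd_def graph_def)
  moreover have "(v, 1) \<in> ?W" "(v, 2) \<in> ?W"
    using \<open>v \<in> V\<close> assms(3) by (auto simp: Gf_verts_def)
  ultimately have "{(v, 1), (v, 2)} \<subseteq> cnbhd ?W ?F q \<inter> set ?S"
    using v(1) by (auto simp: cnbhd_Gf[OF q] set_twin_doubling)
  then show "2 \<le> card (cnbhd ?W ?F q \<inter> set ?S)"
    using card_mono[of "cnbhd ?W ?F q \<inter> set ?S" "{(v, 1), (v, 2)}"] by simp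
qed

lemma grundy_double_dom_Gf:
  assumes "graph V E" "\<forall>v \<in> V. f v \<ge> 1"
  shows "grundy_double_dom (Gf_verts V f) (Gf_adj E) = 2 * grundy_dom V E"
proof -
  let ?L = "{length S | S. double_dom_seq (Gf_verts V f) (Gf_adj E) S}"
  have "finite V" using assms(1) by (simp add: graph_def)
  then have "?L \<subseteq> {..2 * grundy_dom V E}"
    using double_nbhd_seq_Gf_length_le by (fastforce simp: double_dom_seq_def)
  moreover obtain D where "dominating_seq V E D" "length D = grundy_dom V E"
    using grundy_dom_attained[OF \<open>finite V\<close>] by blast
  then have "2 * grundy_dom V E \<in> ?L"
    using double_dom_seq_twin_doubling[OF assms(1) _ assms(2)]
    by (intro CollectI exI[of _ "twin_doubling D"]) simp
  ultimately show ?thesis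
    unfolding grundy_double_dom_def by (intro Max_eqI) (auto intro: finite_subset)
qed

theorem lemma3:
  fixes V :: "'a set" and E :: "'a \<Rightarrow> 'a \<Rightarrow> bool" and f :: "'a \<Rightarrow> nat"
  assumes "graph V E" and "V \<noteq> {}" and "\<forall>v \<in> V. f v \<ge> 1"
  shows "grundy_double_dom (Gf_verts V f) (Gf_adj E) \<le> 2 * grundy_dom V E
     \<and> (\<exists>S k. GDDS (Gf_verts V f) (Gf_adj E) S \<and> length S = 2 * k \<and>
          (\<forall>i < k. true_twins (Gf_verts V f) (Gf_adj E) (S ! (2 * i)) (S ! (2 * i + 1))))"
proof -
  let ?W = "Gf_verts V f" and ?F = "Gf_adj E"
  have "finite V" using assms(1) by (simp add: graph_def)
  then obtain D where D: "dominating_seq V E D" "length D = grundy_dom V E"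
    using grundy_dom_attained by blast
  let ?S = "twin_doubling D"
  have "GDDS ?W ?F ?S"
    using double_dom_seq_twin_doubling[OF assms(1) D(1) assms(3)] D(2)
    by (simp add: GDDS_def grundy_double_dom_Gf[OF assms(1,3)])
  moreover have "true_twins ?W ?F (?S ! (2 * i)) (?S ! (2 * i + 1))" if "i < length D" for i
  proof (rule true_twins_Gf)
    have "set ?S \<subseteq> ?W"
      using D(1) assms(3) by (intro twin_doubling_in_Gf) (simp add: dominating_seq_def legal_seq_def)
    moreover have "2 * i < length ?S" "2 * i + 1 < length ?S" using that by simp_all
    ultimately show "?S ! (2 * i) \<in> ?W" "?S ! (2 * i + 1) \<in> ?W"
      by (blast dest: nth_mem)+
    show "fst (?S ! (2 * i)) = fst (?S ! (2 * i + 1))"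
      using that by (simp add: nth_twin_doubling)
  qed
  ultimately show ?thesis
    using grundy_double_dom_Gf[OF assms(1,3)]
    by (intro conjI exI[of _ ?S] exI[of _ "length D"]) simp_all
qed

end
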